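(* Consider a congestion game with $m\ge1$ players and $F\ge1$ facilities in which every player has the full action space $\mathcal A_i=2^{\mathcal F}$, and let $\bm a^*$ be a pure Nash equilibrium with counts $n^*_f=n^f(\bm a^* )$. Let $S$ be a set of joint actions consisting of $\bm a^*$ together with, for each facility $f$, fixed joint actions $\bm z_f^{0}$, $\bm z_f^{-}$ (only if $n^*_f\ge1$) and $\bm z_f^{+}$ (only if $n^*_f\le m-1$) whose count vectors $(n^g(\cdot))_{g\in\mathcal F}$ agree with $(n^*_g)_{g}$ on every facility $g\ne f$ and have count on $f$ equal to $0$, $n^*_f-1$ and $n^*_f+1$ respectively (so $|S|\le 3F+1$). Let $\rho$ be uniform on $S$ and let $\bm a^1,\dots,\bm a^n$ be i.i.d. from $\rho$. Let $\delta\in(0,1)$. If $n\ge 8(3F+1)\log((3F+1)/\delta)$, then with probability at least $1-\delta$, for every $i\in[m]$ and every $\pi_i\in\Delta(\mathcal A_i)$, $$V\succeq I+\frac{n}{24F^3}\,\mathbb E_{\bm a\sim(\pi_i,\bm a^*_{-i})}\big[A_i(\bm a)A_i(\bm a)^\top\big],$$ where $(\pi_i,\bm a^*_{-i})$ denotes player $i$ playing $\pi_i$ and every other player $j$ playing $a^*_j$. That is, Assumption (Strong Covariance Domination) holds with $C_{\mathrm{game}}=\frac{1}{24F^3}$ and $\pi^*=\bm a^*$.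
   Context: Congestion game: $m$ players, finite facility set $\mathcal F$ with $F=|\mathcal F|$, action sets $\mathcal A_i\subseteq 2^{\mathcal F}$, $\mathcal A=\prod_i\mathcal A_i$, $n^f(\bm a)=|\{i: f\in a_i\}|$; facility $f$ with $\ell\ge1$ users has mean reward $r^f(\ell)$ and player $i$'s mean reward is $r_i(\bm a)=\sum_{f\in a_i}r^f(n^f(\bm a))$. A pure Nash equilibrium is a joint action $\bm a^*$ such that no player can increase $r_i$ by changing only its own action. Feature maps: let $d=mF$ and index coordinates of $\mathbb R^d$ by pairs $(f,\ell)$, $f\in\mathcal F$, $\ell\in\{1,\dots,m\}$, with standard basis vectors $e_{(f,\ell)}$. For $i\in[m]$, $A_i(\bm a)=\sum_{f\in a_i}e_{(f,n^f(\bm a))}$, and the game-level feature is $A(\bm a)=\sum_{i=1}^m A_i(\bm a)=\sum_{f:\,n^f(\bm a)\ge1}n^f(\bm a)\,e_{(f,n^f(\bm a))}$, so that the total reward has mean $\langle A(\bm a),\theta\rangle$ with $\theta_{(f,\ell)}=r^f(\ell)$. Game-level covariance matrix: $V=I+\sum_{k=1}^n A(\bm a^k)A(\bm a^k)^\top$, where $\bm a^1,\dots,\bm a^n$ are the joint actions in the dataset. $\succeq$ is the positive semidefinite (Loewner) order. *)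

theory Defs
  imports "HOL-Probability.Probability"
begin

text \<open>Congestion game with players 0..m-1 and facility type 'f (finite, F = CARD('f)).\<close>

definition joint_action :: "nat \<Rightarrow> (nat \<Rightarrow> 'f set) \<Rightarrow> bool" where
  "joint_action m a \<longleftrightarrow> (\<forall>i. m \<le> i \<longrightarrow> a i = {})"

definition cnt :: "nat \<Rightarrow> (nat \<Rightarrow> 'f set) \<Rightarrow> 'f \<Rightarrow> nat" where
  "cnt m a f = card {i. i < m \<and> f \<in> a i}"

definition player_reward :: "nat \<Rightarrow> ('f \<Rightarrow> nat \<Rightarrow> real) \<Rightarrow> (nat \<Rightarrow> 'f set) \<Rightarrow> nat \<Rightarrow> real" where
  "player_reward m r a i = (\<Sum>f\<in>a i. r f (cnt m a f))"

definition pure_NE :: "nat \<Rightarrow> ('f \<Rightarrow> nat \<Rightarrow> real) \<Rightarrow> (nat \<Rightarrow> 'f set) \<Rightarrow> bool" where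
  "pure_NE m r a \<longleftrightarrow> joint_action m a \<and>
     (\<forall>i<m. \<forall>b::'f set. player_reward m r (a(i := b)) i \<le> player_reward m r a i)"

definition coords :: "nat \<Rightarrow> ('f \<times> nat) set" where
  "coords m = UNIV \<times> {1..m}"

definition featA_i :: "nat \<Rightarrow> (nat \<Rightarrow> 'f set) \<Rightarrow> nat \<Rightarrow> ('f \<times> nat) \<Rightarrow> real" where
  "featA_i m a i = (\<lambda>(f, l). if f \<in> a i \<and> l = cnt m a f then 1 else 0)"

definition featA :: "nat \<Rightarrow> (nat \<Rightarrow> 'f set) \<Rightarrow> ('f \<times> nat) \<Rightarrow> real" where
  "featA m a = (\<lambda>p. \<Sum>i<m. featA_i m a i p)"

definition covV :: "nat \<Rightarrow> nat \<Rightarrow> (nat \<Rightarrow> nat \<Rightarrow> 'f set) \<Rightarrow> ('f \<times> nat) \<Rightarrow> ('f \<times> nat) \<Rightarrow> real" where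
  "covV m n samp = (\<lambda>p q. (if p = q then 1 else 0) + (\<Sum>k<n. featA m (samp k) p * featA m (samp k) q))"

definition quad_form :: "'i set \<Rightarrow> ('i \<Rightarrow> 'i \<Rightarrow> real) \<Rightarrow> ('i \<Rightarrow> real) \<Rightarrow> real" where
  "quad_form D M x = (\<Sum>p\<in>D. \<Sum>q\<in>D. x p * M p q * x q)"

definition loewner_ge :: "'i set \<Rightarrow> ('i \<Rightarrow> 'i \<Rightarrow> real) \<Rightarrow> ('i \<Rightarrow> 'i \<Rightarrow> real) \<Rightarrow> bool" where
  "loewner_ge D M N \<longleftrightarrow> (\<forall>x. quad_form D (\<lambda>p q. M p q - N p q) x \<ge> 0)"

definition dom_matrix :: "nat \<Rightarrow> real \<Rightarrow> (nat \<Rightarrow> 'f set) \<Rightarrow> nat \<Rightarrow> 'f set pmf \<Rightarrow> ('f \<times> nat) \<Rightarrow> ('f \<times> nat) \<Rightarrow> real" where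
  "dom_matrix m c astar i \<pi> = (\<lambda>p q. (if p = q then 1 else 0) +
     c * measure_pmf.expectation \<pi> (\<lambda>b. featA_i m (astar(i := b)) i p * featA_i m (astar(i := b)) i q))"

end

(*
  Testing the Loewner inequality against a vector x turns both sides into sums of squared
  linear forms.  Write n_f for the load of facility f under astar.  On the sample side
  <A(a), x> = sum_f n^f(a) x(f, n^f(a)).  On the deviation side, player i switching to b sees
  exactly the coordinates (f, l_f), f in b, where l_f = n_f if f in astar i and l_f = n_f + 1
  otherwise; by Cauchy-Schwarz the expected square is at most F * sum_f x(f, l_f)^2.  Each
  l_f x(f, l_f) is a difference of two probe values, <A(astar), x> - <A(z0 f), x> or
  <A(zp f), x> - <A(z0 f), x>, which gives sum_f x(f, l_f)^2 <= (F + 1) sum_{s in S} <A(s), x>^2.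
  A Chernoff bound and a union bound show that with probability at least 1 - delta every
  element of S is sampled at least n / (2 |S|) times, and F (F + 1) / (24 F^3) <= 1 / (2 (3F + 1))
  closes the argument.
*)

theory Submission
  imports Defs "HOL-Analysis.Harmonic_Numbers"
begin

lemma cnt_le: "cnt m a f \<le> m"
proof -
  have "{i. i < m \<and> f \<in> a i} \<subseteq> {..<m}" by auto
  then show ?thesis unfolding cnt_def using card_mono[of "{..<m}"] by fastforce
qed

lemma cnt_ge_1: "i < m \<Longrightarrow> f \<in> a i \<Longrightarrow> 1 \<le> cnt m a f"
  unfolding cnt_def by (auto simp: Suc_le_eq card_gt_0_iff)

lemma cnt_le_diff_1:
  assumes "i < m" "f \<notin> a i"
  shows "cnt m a f \<le> m - 1"
proof -
  have "{j. j < m \<and> f \<in> a j} \<subseteq> {..<m} - {i}" using assms by auto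
  then show ?thesis unfolding cnt_def using assms card_mono[of "{..<m} - {i}"] by fastforce
qed

definition dev_cnt :: "nat \<Rightarrow> (nat \<Rightarrow> 'f set) \<Rightarrow> nat \<Rightarrow> 'f \<Rightarrow> nat" where
  "dev_cnt m a i f = (if f \<in> a i then cnt m a f else cnt m a f + 1)"

lemma cnt_fun_upd:
  assumes "i < m" "f \<in> b"
  shows "cnt m (a(i := b)) f = dev_cnt m a i f"
proof -
  have "{j. j < m \<and> f \<in> (a(i := b)) j} = insert i {j. j < m \<and> f \<in> a j}"
    using assms by auto
  then show ?thesis unfolding cnt_def dev_cnt_def using assms by (simp add: card_insert_if)
qed

definition featA_inner ::
  "nat \<Rightarrow> ('f::finite \<times> nat \<Rightarrow> real) \<Rightarrow> (nat \<Rightarrow> 'f set) \<Rightarrow> real" where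
  "featA_inner m x a = (\<Sum>f\<in>UNIV. real (cnt m a f) * x (f, cnt m a f))"

lemma sum_coords_single_level:
  fixes c :: "'f::finite \<Rightarrow> nat" and h :: "'f \<Rightarrow> real"
  assumes "\<And>f. h f \<noteq> 0 \<Longrightarrow> c f \<in> {1..m}"
  shows "(\<Sum>p\<in>coords m. (case p of (f, l) \<Rightarrow> if l = c f then h f else 0) * x p)
       = (\<Sum>f\<in>UNIV. h f * x (f, c f))"
proof -
  have "(\<Sum>p\<in>coords m. G p) = (\<Sum>f\<in>UNIV. \<Sum>l\<in>{1..m}. G (f, l))"
    for G :: "'f \<times> nat \<Rightarrow> real"
    unfolding coords_def by (simp add: sum.cartesian_product)
  then have "(\<Sum>p\<in>coords m. (case p of (f, l) \<Rightarrow> if l = c f then h f else 0) * x p)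
      = (\<Sum>f\<in>UNIV. \<Sum>l\<in>{1..m}. if l = c f then h f * x (f, l) else 0)"
    by (simp only: prod.case if_distrib[of "\<lambda>u. u * _"] mult_zero_left)
  also have "\<dots> = (\<Sum>f\<in>UNIV. h f * x (f, c f))"
    using assms by (intro sum.cong refl) (force simp: sum.delta')
  finally show ?thesis .
qed

lemma featA_eq: "featA m a = (\<lambda>(f, l). if l = cnt m a f then real (cnt m a f) else 0)"
proof (intro ext, clarify)
  fix f l
  have "featA m a (f, l) = (\<Sum>i<m. if l = cnt m a f \<and> f \<in> a i then 1 else 0)"
    unfolding featA_def featA_i_def by (simp add: conj_commute)
  also have "\<dots> = (if l = cnt m a f then real (cnt m a f) else 0)"
    by (simp add: sum.If_cases Int_def cnt_def conj_commute lessThan_def)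
  finally show "featA m a (f, l) = (if l = cnt m a f then real (cnt m a f) else 0)" .
qed

lemma sum_coords_featA_mult:
  "(\<Sum>p\<in>coords m. featA m (a :: nat \<Rightarrow> 'f::finite set) p * x p) = featA_inner m x a"
  unfolding featA_eq featA_inner_def
  by (rule sum_coords_single_level) (auto simp: cnt_le)

lemma sum_coords_featA_i_fun_upd_mult:
  fixes a :: "nat \<Rightarrow> 'f::finite set"
  assumes "i < m"
  shows "(\<Sum>p\<in>coords m. featA_i m (a(i := b)) i p * x p) = (\<Sum>f\<in>b. x (f, dev_cnt m a i f))"
proof -
  have featA_i_eq: "featA_i m (a(i := b)) i
      = (\<lambda>(f, l). if l = dev_cnt m a i f then of_bool (f \<in> b) else 0)"
  proof (intro ext, clarify)
    fix f l
    show "featA_i m (a(i := b)) i (f, l) = (if l = dev_cnt m a i f then of_bool (f \<in> b) else 0)"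
      by (cases "f \<in> b") (simp_all add: featA_i_def cnt_fun_upd[OF assms])
  qed
  have dev_cnt_range: "dev_cnt m a i f \<in> {1..m}" if "f \<in> b" for f
    using that assms cnt_fun_upd[of i m f b a] cnt_le[of m "a(i := b)" f]
      cnt_ge_1[of i m f "a(i := b)"] by simp
  have "(\<Sum>p\<in>coords m. featA_i m (a(i := b)) i p * x p)
      = (\<Sum>f\<in>UNIV. of_bool (f \<in> b) * x (f, dev_cnt m a i f))"
    unfolding featA_i_eq by (intro sum_coords_single_level dev_cnt_range) simp
  then show ?thesis by simp
qed

lemma featA_inner_diff:
  fixes a a' :: "nat \<Rightarrow> 'f::finite set"
  assumes "\<And>g. g \<noteq> f \<Longrightarrow> cnt m a g = cnt m a' g"
  shows "featA_inner m x a - featA_inner m x a'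
       = real (cnt m a f) * x (f, cnt m a f) - real (cnt m a' f) * x (f, cnt m a' f)"
proof -
  have "(\<Sum>g\<in>UNIV - {f}. real (cnt m a g) * x (g, cnt m a g))
      = (\<Sum>g\<in>UNIV - {f}. real (cnt m a' g) * x (g, cnt m a' g))"
    using assms by (intro sum.cong) auto
  then show ?thesis unfolding featA_inner_def by (simp add: sum.remove[of UNIV f])
qed

lemma quad_form_diff: "quad_form D (\<lambda>p q. M p q - N p q) x = quad_form D M x - quad_form D N x"
  unfolding quad_form_def by (simp add: algebra_simps sum_subtractf)

lemma quad_form_id_plus_sum_outer:
  assumes "finite D"
  shows "quad_form D (\<lambda>p q. (if p = q then 1 else 0) + c * (\<Sum>k\<in>K. w k * g k p * g k q)) x
       = (\<Sum>p\<in>D. x p ^ 2) + c * (\<Sum>k\<in>K. w k * (\<Sum>p\<in>D. g k p * x p) ^ 2)"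
proof -
  have "quad_form D (\<lambda>p q. (if p = q then 1 else 0) + c * (\<Sum>k\<in>K. w k * g k p * g k q)) x
      = (\<Sum>p\<in>D. \<Sum>q\<in>D. if p = q then x p * x q else 0)
        + (\<Sum>p\<in>D. \<Sum>q\<in>D. c * (\<Sum>k\<in>K. w k * (g k p * x p) * (g k q * x q)))"
    unfolding quad_form_def sum.distrib[symmetric]
    by (intro sum.cong refl) (simp add: algebra_simps sum_distrib_left sum_distrib_right)
  also have "\<dots> = (\<Sum>p\<in>D. x p ^ 2)
      + c * (\<Sum>k\<in>K. w k * (\<Sum>p\<in>D. g k p * x p) * (\<Sum>q\<in>D. g k q * x q))"
    using assms
    by (simp add: power2_eq_square sum_distrib_left sum_distrib_right sum.swap[of _ K] algebra_simps)
  finally show ?thesis by (simp add: power2_eq_square mult.assoc)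
qed

lemma finite_coords: "finite (coords m :: ('f::finite \<times> nat) set)"
  unfolding coords_def by simp

lemma quad_form_covV:
  "quad_form (coords m) (covV m n samp) x
     = (\<Sum>p\<in>coords m. x p ^ 2)
       + (\<Sum>k<n. featA_inner m x (samp k :: nat \<Rightarrow> 'f::finite set) ^ 2)"
proof -
  have covV_eq: "covV m n samp = (\<lambda>p q. (if p = q then 1 else 0)
          + 1 * (\<Sum>k<n. 1 * featA m (samp k) p * featA m (samp k) q))"
    unfolding covV_def by simp
  show ?thesis
    unfolding covV_eq quad_form_id_plus_sum_outer[OF finite_coords] by (simp add: sum_coords_featA_mult)
qed

lemma quad_form_dom_matrix:
  fixes a :: "nat \<Rightarrow> 'f::finite set"
  assumes "i < m"
  shows "quad_form (coords m) (dom_matrix m c a i \<pi>) x = (\<Sum>p\<in>coords m. x p ^ 2)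
     + c * (\<Sum>b\<in>UNIV. pmf \<pi> b * (\<Sum>f\<in>b. x (f, dev_cnt m a i f)) ^ 2)"
proof -
  have dom_matrix_eq: "dom_matrix m c a i \<pi> = (\<lambda>p q. (if p = q then 1 else 0)
          + c * (\<Sum>b\<in>UNIV. pmf \<pi> b * featA_i m (a(i := b)) i p * featA_i m (a(i := b)) i q))"
    unfolding dom_matrix_def
    by (intro ext, subst integral_measure_pmf_real[where A = UNIV]) (auto simp: ac_simps)
  show ?thesis
    unfolding dom_matrix_eq quad_form_id_plus_sum_outer[OF finite_coords]
    by (simp add: sum_coords_featA_i_fun_upd_mult[OF assms])
qed

lemma square_sum_le_card_mult_sum_squares:
  fixes y :: "'f::finite \<Rightarrow> real"
  shows "(\<Sum>f\<in>b. y f)\<^sup>2 \<le> real CARD('f) * (\<Sum>f\<in>UNIV. (y f)\<^sup>2)"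
proof -
  have "(\<Sum>f\<in>b. y f * 1)\<^sup>2 \<le> (\<Sum>f\<in>b. (y f)\<^sup>2) * (\<Sum>f\<in>b. 1\<^sup>2)"
    by (rule Cauchy_Schwarz_ineq_sum)
  also have "\<dots> \<le> (\<Sum>f\<in>UNIV. (y f)\<^sup>2) * real CARD('f)"
    by (intro mult_mono sum_mono2) (auto simp: card_mono sum_nonneg)
  finally show ?thesis by (simp add: mult.commute)
qed

lemma expectation_dev_sq_le:
  fixes a :: "nat \<Rightarrow> 'f::finite set"
  shows "(\<Sum>b\<in>UNIV. pmf \<pi> b * (\<Sum>f\<in>b. x (f, dev_cnt m a i f))\<^sup>2)
       \<le> real CARD('f) * (\<Sum>f\<in>UNIV. (x (f, dev_cnt m a i f))\<^sup>2)"
proof -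
  have "(\<Sum>b\<in>UNIV. pmf \<pi> b * (\<Sum>f\<in>b. x (f, dev_cnt m a i f))\<^sup>2)
      \<le> (\<Sum>b\<in>UNIV. pmf \<pi> b *
            (real CARD('f) * (\<Sum>f\<in>UNIV. (x (f, dev_cnt m a i f))\<^sup>2)))"
    by (intro sum_mono mult_left_mono square_sum_le_card_mult_sum_squares) auto
  also have "\<dots> = real CARD('f) * (\<Sum>f\<in>UNIV. (x (f, dev_cnt m a i f))\<^sup>2)"
    by (simp add: sum_distrib_right[symmetric] sum_pmf_eq_1)
  finally show ?thesis .
qed

lemma square_le_weighted_sum_squares:
  fixes F u v y :: real
  assumes "0 < F" "y\<^sup>2 \<le> (u - v)\<^sup>2"
  shows "y\<^sup>2 \<le> (F + 1) * (u\<^sup>2 / F + v\<^sup>2)"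
proof -
  have "F * ((F + 1) * (u\<^sup>2 / F + v\<^sup>2) - (u - v)\<^sup>2) = (u + F * v)\<^sup>2"
    using assms by (simp add: field_simps power2_eq_square)
  then have "(u - v)\<^sup>2 \<le> (F + 1) * (u\<^sup>2 / F + v\<^sup>2)"
    using assms(1) by (metis diff_ge_0_iff_ge zero_le_mult_iff zero_le_power2 not_less)
  with assms(2) show ?thesis by linarith
qed

lemma square_le_square_mult: "1 \<le> k \<Longrightarrow> y\<^sup>2 \<le> (k * y)\<^sup>2" for k y :: real
  by (simp add: power_mult_distrib) (metis mult_right_mono one_le_power zero_le_power2 mult_1)

lemma scaling_constant_le:
  fixes F K n :: real
  assumes "1 \<le> F" "0 < K" "K \<le> 3 * F + 1" "0 \<le> n"
  shows "n / (24 * F ^ 3) * (F * (F + 1)) \<le> n / (2 * K)"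
proof -
  have "2 * K * (F + 1) \<le> 2 * (3 * F + 1) * (F + 1)"
    using assms by (intro mult_right_mono) auto
  also have "\<dots> \<le> 24 * F\<^sup>2"
  proof -
    have "24 * F\<^sup>2 - 2 * (3 * F + 1) * (F + 1) = 2 * (F - 1) * (9 * F + 5) + 8"
      by (simp add: algebra_simps power2_eq_square)
    moreover have "0 \<le> 2 * (F - 1) * (9 * F + 5)" using assms(1) by simp
    ultimately show ?thesis by linarith
  qed
  finally have "n * (F + 1) * (2 * K) \<le> n * (24 * F\<^sup>2)"
    using assms(4) mult_left_mono by (fastforce simp: ac_simps)
  then have "n * (F + 1) / (24 * F\<^sup>2) \<le> n / (2 * K)"
    using assms(1,2) by (simp add: divide_le_eq le_divide_eq ac_simps)
  moreover have "n / (24 * F ^ 3) * (F * (F + 1)) = n * (F + 1) / (24 * F\<^sup>2)"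
    using assms(1) by (simp add: power2_eq_square power3_eq_cube)
  ultimately show ?thesis by simp
qed

lemma sum_count_mult_le_sum:
  fixes h :: "'a \<Rightarrow> real" and n :: nat
  assumes "finite S" "\<And>s. 0 \<le> h s"
  shows "(\<Sum>s\<in>S. real (card {k\<in>{..<n}. samp k = s}) * h s) \<le> (\<Sum>k<n. h (samp k))"
proof -
  have "(\<Sum>s\<in>S. real (card {k\<in>{..<n}. samp k = s}) * h s)
      = (\<Sum>s\<in>S. \<Sum>k\<in>{k\<in>{k. k < n \<and> samp k \<in> S}. samp k = s}. h (samp k))"
  proof (intro sum.cong refl)
    fix s assume "s \<in> S"
    then have "{k\<in>{k. k < n \<and> samp k \<in> S}. samp k = s} = {k\<in>{..<n}. samp k = s}" by auto
    then show "real (card {k\<in>{..<n}. samp k = s}) * h s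
        = (\<Sum>k\<in>{k\<in>{k. k < n \<and> samp k \<in> S}. samp k = s}. h (samp k))" by simp
  qed
  also have "\<dots> = (\<Sum>k\<in>{k. k < n \<and> samp k \<in> S}. h (samp k))"
    using assms(1) by (intro sum.group) auto
  also have "\<dots> \<le> (\<Sum>k<n. h (samp k))"
    using assms(2) by (intro sum_mono2) auto
  finally show ?thesis .
qed

(* Markov's inequality for 2 powr (- count), i.e. a Chernoff bound with the fixed tilt ln 2. *)
lemma prob_count_lt_half_mean:
  fixes p :: "'a pmf"
  shows "measure_pmf.prob (Pi_pmf {..<n} d (\<lambda>_. p))
           {samp. real (card {k\<in>{..<n}. samp k = s}) < real n * pmf p s / 2}
         \<le> exp (- real n * pmf p s / 8)"
proof -
  define M where "M = Pi_pmf {..<n} d (\<lambda>_. p)"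
  define q where "q = pmf p s"
  define g where "g y = (if y = s then 1/2 else 1 :: real)" for y
  define X where "X samp = card {k\<in>{..<n}. samp k = s}" for samp :: "nat \<Rightarrow> 'a"
  define t where "t = real n * q / 2"
  have q: "0 \<le> q" "q \<le> 1" unfolding q_def by (simp_all add: pmf_le_1)
  have int_g: "integrable (measure_pmf p) g"
    by (rule measure_pmf.integrable_const_bound[where B=1]) (auto simp: g_def)
  have "g = (\<lambda>y. 1 - indicator {s} y / 2)"
    by (auto simp: g_def indicator_def)
  then have E_g: "measure_pmf.expectation p g = 1 - q / 2"
    by (simp add: measure_pmf.integrable_const_bound[where B = 1] measure_pmf_single q_def)
  have g_nonneg: "0 \<le> g y" for y by (simp add: g_def)
  have prod_g: "(\<Prod>k<n. g (samp k)) = 2 powr (- real (X samp))" for samp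
    by (simp add: g_def X_def prod.If_cases Int_def conj_commute
        powr_minus powr_realpow inverse_eq_divide power_one_over)
  have "measure_pmf.prob M {samp. real (X samp) < t}
      \<le> measure_pmf.prob M {samp \<in> space (measure_pmf M). (\<Prod>k<n. g (samp k)) \<ge> 2 powr (- t)}"
    by (intro measure_pmf.finite_measure_mono) (auto simp: prod_g)
  also have "\<dots> \<le> measure_pmf.expectation M (\<lambda>samp. \<Prod>k<n. g (samp k)) / 2 powr (- t)"
    unfolding M_def
    by (intro integral_Markov_inequality_measure integrable_prod_Pi_pmf int_g)
       (auto simp: g_def intro!: prod_nonneg)
  also have "\<dots> = (1 - q / 2) ^ n * 2 powr t"
    unfolding M_def
    by (subst expectation_prod_Pi_pmf) (auto simp: int_g E_g g_nonneg powr_minus_divide)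
  also have "\<dots> \<le> exp (- q / 2) ^ n * exp (t * ln 2)"
    using q exp_ge_add_one_self[of "- q / 2"] by (intro mult_mono power_mono) (auto simp: powr_def mult.commute)
  also have "\<dots> = exp (- t + t * ln 2)"
    by (simp add: exp_add[symmetric] exp_of_nat_mult[symmetric] t_def)
  also have "\<dots> \<le> exp (- real n * q / 8)"
    using mult_left_mono[of "ln 2" "3/4" "real n * q"] ln2_le_25_over_36 q
    by (simp add: t_def)
  finally show ?thesis unfolding M_def X_def t_def q_def .
qed

lemma prob_all_frequent:
  fixes S :: "'a set" and n :: nat
  assumes "finite S" "S \<noteq> {}"
  shows "1 - real (card S) * exp (- (real n / real (card S)) / 8)
    \<le> measure_pmf.prob (Pi_pmf {..<n} d (\<lambda>_. pmf_of_set S))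
         {samp. \<forall>s\<in>S. real n / (2 * real (card S)) \<le> real (card {k\<in>{..<n}. samp k = s})}"
proof -
  define M where "M = Pi_pmf {..<n} d (\<lambda>_. pmf_of_set S)"
  define K where "K = real (card S)"
  define rare where "rare s = {samp. real (card {k\<in>{..<n}. samp k = s}) < real n / (2 * K)}" for s :: 'a
  have "measure_pmf.prob M (\<Union>s\<in>S. rare s) \<le> (\<Sum>s\<in>S. measure_pmf.prob M (rare s))"
    using assms(1) by (intro measure_pmf.finite_measure_subadditive_finite) auto
  also have "\<dots> \<le> (\<Sum>s\<in>S. exp (- (real n / K) / 8))"
  proof (intro sum_mono)
    fix s assume "s \<in> S"
    then have "pmf (pmf_of_set S) s = 1 / K" using assms unfolding K_def by simp
    then show "measure_pmf.prob M (rare s) \<le> exp (- (real n / K) / 8)"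
      using prob_count_lt_half_mean[of n d "pmf_of_set S" s] unfolding M_def rare_def by (simp add: ac_simps)
  qed
  also have "\<dots> = K * exp (- (real n / K) / 8)" unfolding K_def by simp
  finally have "measure_pmf.prob M (\<Union>s\<in>S. rare s) \<le> K * exp (- (real n / K) / 8)" .
  moreover have "{samp. \<forall>s\<in>S. real n / (2 * K) \<le> real (card {k\<in>{..<n}. samp k = s})}
      = UNIV - (\<Union>s\<in>S. rare s)"
    unfolding rare_def by (auto simp: not_less)
  moreover have "measure_pmf.prob M (UNIV - (\<Union>s\<in>S. rare s))
      = 1 - measure_pmf.prob M (\<Union>s\<in>S. rare s)"
    using measure_pmf.prob_compl[of "\<Union>s\<in>S. rare s" M] by simp
  ultimately show ?thesis
    unfolding M_def[symmetric] K_def[symmetric] by simp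
qed

lemma card_mult_exp_le:
  fixes K F n \<delta> :: real
  assumes "1 \<le> K" "K \<le> 3 * F + 1" "0 < \<delta>" "\<delta> < 1"
    and "8 * (3 * F + 1) * ln ((3 * F + 1) / \<delta>) \<le> n"
  shows "K * exp (- (n / K) / 8) \<le> \<delta>"
proof -
  have "K * ln (K / \<delta>) \<le> (3 * F + 1) * ln ((3 * F + 1) / \<delta>)"
    using assms(1-4) by (intro mult_mono) (auto simp: divide_right_mono)
  then have "ln (K / \<delta>) \<le> (n / K) / 8"
    using assms(1,5) by (simp add: field_simps)
  then have "exp (- (n / K) / 8) \<le> exp (- ln (K / \<delta>))" by simp
  also have "\<dots> = \<delta> / K" using assms(1,3) by (simp add: exp_minus)
  finally show ?thesis using assms(1) by (simp add: field_simps)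
qed

locale probe_actions =
  fixes m :: nat and astar :: "nat \<Rightarrow> 'f::finite set"
    and z0 zp :: "'f \<Rightarrow> nat \<Rightarrow> 'f set"
  assumes cnt_z0: "cnt m (z0 f) g = (if g = f then 0 else cnt m astar g)"
    and cnt_zp: "cnt m astar f \<le> m - 1 \<Longrightarrow>
      cnt m (zp f) g = (if g = f then cnt m astar f + 1 else cnt m astar g)"
begin

definition probes :: "(nat \<Rightarrow> 'f set) set" where
  "probes = insert astar (z0 ` {f. 1 \<le> cnt m astar f} \<union> zp ` {f. cnt m astar f \<le> m - 1})"

lemma featA_inner_astar_minus_z0:
  "featA_inner m x astar - featA_inner m x (z0 f) = real (cnt m astar f) * x (f, cnt m astar f)"
  using featA_inner_diff[of f m astar "z0 f" x] cnt_z0 by simp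

lemma featA_inner_zp_minus_z0:
  "cnt m astar f \<le> m - 1 \<Longrightarrow> featA_inner m x (zp f) - featA_inner m x (z0 f)
     = real (cnt m astar f + 1) * x (f, cnt m astar f + 1)"
  using featA_inner_diff[of f m "zp f" "z0 f" x] cnt_z0 cnt_zp by simp

(* The weight 1/F on the square of <A(astar), x> lets the single probe astar serve all F
   facilities. *)
lemma dev_sq_le:
  assumes "i < m"
  shows "(x (f, dev_cnt m astar i f))\<^sup>2 \<le> (real CARD('f) + 1) *
    ((featA_inner m x astar)\<^sup>2 / real CARD('f)
     + of_bool (1 \<le> cnt m astar f) * (featA_inner m x (z0 f))\<^sup>2
     + of_bool (cnt m astar f \<le> m - 1) * (featA_inner m x (zp f))\<^sup>2)"
proof -
  define F where "F = real CARD('f)"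
  define u where "u = featA_inner m x astar"
  define v where "v = featA_inner m x (z0 f)"
  define w where "w = featA_inner m x (zp f)"
  have F: "1 \<le> F" unfolding F_def by (simp add: Suc_le_eq)
  show ?thesis
  proof (cases "f \<in> astar i")
    case True
    then have P: "1 \<le> cnt m astar f" using cnt_ge_1[OF assms, of f astar] by simp
    then have "(x (f, cnt m astar f))\<^sup>2 \<le> (u - v)\<^sup>2"
      using square_le_square_mult featA_inner_astar_minus_z0 unfolding u_def v_def by simp
    then have "(x (f, cnt m astar f))\<^sup>2 \<le> (F + 1) * (u\<^sup>2 / F + v\<^sup>2)"
      using F by (intro square_le_weighted_sum_squares) auto
    also have "\<dots> \<le> (F + 1) * (u\<^sup>2 / F + v\<^sup>2 + of_bool (cnt m astar f \<le> m - 1) * w\<^sup>2)"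
      using F by (intro mult_left_mono) auto
    finally show ?thesis
      using True P unfolding dev_cnt_def F_def u_def v_def w_def by simp
  next
    case False
    then have Q: "cnt m astar f \<le> m - 1" using cnt_le_diff_1[OF assms, of f astar] by simp
    have x_sq: "(x (f, cnt m astar f + 1))\<^sup>2 \<le> (w - v)\<^sup>2"
      using square_le_square_mult[of "real (cnt m astar f + 1)"] featA_inner_zp_minus_z0[OF Q]
      unfolding v_def w_def by simp
    have v_bound: "v\<^sup>2 / F \<le> u\<^sup>2 / F + of_bool (1 \<le> cnt m astar f) * v\<^sup>2"
    proof (cases "1 \<le> cnt m astar f")
      case True
      have "v\<^sup>2 * 1 \<le> v\<^sup>2 * F" using F by (intro mult_left_mono) auto
      then have "v\<^sup>2 / F \<le> v\<^sup>2" using F by (simp add: divide_le_eq)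
      moreover have "0 \<le> u\<^sup>2 / F" using F by simp
      ultimately show ?thesis using True by simp
    next
      case False
      then have "u = v" using featA_inner_astar_minus_z0[of x f] unfolding u_def v_def by (simp add: not_le)
      then show ?thesis by simp
    qed
    have "(x (f, cnt m astar f + 1))\<^sup>2 \<le> (F + 1) * (v\<^sup>2 / F + w\<^sup>2)"
      using x_sq F by (intro square_le_weighted_sum_squares) (auto simp: power2_commute)
    also have "\<dots> \<le> (F + 1) * (u\<^sup>2 / F + of_bool (1 \<le> cnt m astar f) * v\<^sup>2 + w\<^sup>2)"
      using v_bound F by (intro mult_left_mono) auto
    finally show ?thesis
      using False Q unfolding dev_cnt_def F_def u_def v_def w_def by simp
  qed
qed

lemma sum_probes:
  "(\<Sum>s\<in>probes. (featA_inner m x s)\<^sup>2) = (featA_inner m x astar)\<^sup>2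
     + (\<Sum>f\<in>{f. 1 \<le> cnt m astar f}. (featA_inner m x (z0 f))\<^sup>2)
     + (\<Sum>f\<in>{f. cnt m astar f \<le> m - 1}. (featA_inner m x (zp f))\<^sup>2)"
proof -
  define P where "P = {f. 1 \<le> cnt m astar f}"
  define Q where "Q = {f. cnt m astar f \<le> m - 1}"
  have "inj_on z0 P"
    by (rule inj_onI) (metis P_def cnt_z0 mem_Collect_eq not_one_le_zero)
  moreover have "inj_on zp Q"
    by (rule inj_onI) (metis Q_def cnt_zp mem_Collect_eq n_not_Suc_n Suc_eq_plus1)
  moreover have "astar \<notin> z0 ` P"
    using cnt_z0 unfolding P_def by (metis (mono_tags) image_iff mem_Collect_eq not_one_le_zero)
  moreover have "astar \<notin> zp ` Q"
    using cnt_zp unfolding Q_def by (metis (mono_tags) image_iff mem_Collect_eq n_not_Suc_n Suc_eq_plus1)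
  moreover have "z0 ` P \<inter> zp ` Q = {}"
  proof -
    have "z0 f \<noteq> zp g" if "g \<in> Q" for f g
      using that cnt_z0[of f g] cnt_zp[of g g] unfolding Q_def by (auto split: if_splits)
    then show ?thesis by blast
  qed
  ultimately show ?thesis
    unfolding probes_def P_def[symmetric] Q_def[symmetric]
    by (simp add: sum.union_disjoint sum.reindex)
qed

lemma sum_dev_sq_le:
  assumes "i < m"
  shows "(\<Sum>f\<in>UNIV. (x (f, dev_cnt m astar i f))\<^sup>2)
       \<le> (real CARD('f) + 1) * (\<Sum>s\<in>probes. (featA_inner m x s)\<^sup>2)"
proof -
  have "(\<Sum>f\<in>UNIV. (x (f, dev_cnt m astar i f))\<^sup>2) \<le> (\<Sum>f\<in>UNIV. (real CARD('f) + 1) *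
    ((featA_inner m x astar)\<^sup>2 / real CARD('f)
     + of_bool (1 \<le> cnt m astar f) * (featA_inner m x (z0 f))\<^sup>2
     + of_bool (cnt m astar f \<le> m - 1) * (featA_inner m x (zp f))\<^sup>2))"
    by (intro sum_mono dev_sq_le[OF assms])
  also have "\<dots> = (real CARD('f) + 1) * (\<Sum>s\<in>probes. (featA_inner m x s)\<^sup>2)"
    unfolding sum_probes by (simp add: sum_distrib_left[symmetric] sum.distrib)
  finally show ?thesis .
qed

lemma loewner_ge_covV_dom_matrix:
  assumes "i < m" "finite S" "probes \<subseteq> S" "card S \<le> 3 * CARD('f) + 1"
    and freq: "\<forall>s\<in>S. real n / (2 * real (card S)) \<le> real (card {k\<in>{..<n}. samp k = s})"
  shows "loewner_ge (coords m) (covV m n samp)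
           (dom_matrix m (real n / (24 * real CARD('f) ^ 3)) astar i \<pi>)"
  unfolding loewner_ge_def quad_form_diff quad_form_covV quad_form_dom_matrix[OF assms(1)]
proof
  fix x :: "'f \<times> nat \<Rightarrow> real"
  define F where "F = real CARD('f)"
  define K where "K = real (card S)"
  define L where "L s = (featA_inner m x s)\<^sup>2" for s
  define c where "c = real n / (24 * F ^ 3)"
  have F: "1 \<le> F" unfolding F_def by (simp add: Suc_le_eq)
  have K: "0 < K" "K \<le> 3 * F + 1"
    using assms(2-4) unfolding K_def F_def probes_def by (auto simp: card_gt_0_iff)
  have "c * (\<Sum>b\<in>UNIV. pmf \<pi> b * (\<Sum>f\<in>b. x (f, dev_cnt m astar i f))\<^sup>2)
      \<le> c * (F * (\<Sum>f\<in>UNIV. (x (f, dev_cnt m astar i f))\<^sup>2))"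
    unfolding c_def F_def by (intro mult_left_mono expectation_dev_sq_le) auto
  also have "\<dots> \<le> c * (F * ((F + 1) * (\<Sum>s\<in>probes. L s)))"
    using sum_dev_sq_le[OF assms(1)] F unfolding L_def c_def F_def by (intro mult_left_mono) auto
  also have "\<dots> \<le> c * (F * ((F + 1) * (\<Sum>s\<in>S. L s)))"
    using F assms(2,3) unfolding c_def L_def by (intro mult_left_mono sum_mono2) auto
  also have "\<dots> = c * (F * (F + 1)) * (\<Sum>s\<in>S. L s)"
    by (simp add: ac_simps)
  also have "\<dots> \<le> real n / (2 * K) * (\<Sum>s\<in>S. L s)"
    using scaling_constant_le[OF F K] unfolding c_def L_def
    by (intro mult_right_mono sum_nonneg) auto
  also have "\<dots> \<le> (\<Sum>s\<in>S. real (card {k\<in>{..<n}. samp k = s}) * L s)"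
    unfolding sum_distrib_left K_def L_def by (intro sum_mono mult_right_mono) (use freq in auto)
  also have "\<dots> \<le> (\<Sum>k<n. L (samp k))"
    using assms(2) unfolding L_def by (intro sum_count_mult_le_sum) auto
  finally show "0 \<le> (\<Sum>p\<in>coords m. (x p)\<^sup>2) + (\<Sum>k<n. (featA_inner m x (samp k))\<^sup>2) -
      ((\<Sum>p\<in>coords m. (x p)\<^sup>2) + real n / (24 * real CARD('f) ^ 3) *
        (\<Sum>b\<in>UNIV. pmf \<pi> b * (\<Sum>f\<in>b. x (f, dev_cnt m astar i f))\<^sup>2))"
    unfolding c_def F_def L_def by simp
qed

end

lemma card_probe_set_le:
  fixes g h k :: "'f::finite \<Rightarrow> 'a"
  shows "card ({a} \<union> range g \<union> {h f | f. P f} \<union> {k f | f. Q f}) \<le> 3 * CARD('f) + 1"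
proof -
  have "card ({a} \<union> range g \<union> h ` {f. P f} \<union> k ` {f. Q f})
      \<le> card {a} + card (range g) + card (h ` {f. P f}) + card (k ` {f. Q f})"
    by (meson card_Un_le add_mono order_trans le_refl)
  also have "\<dots> \<le> 1 + CARD('f) + CARD('f) + CARD('f)"
    by (intro add_mono card_image_le[THEN order_trans] card_mono) auto
  finally show ?thesis by (simp add: setcompr_eq_image)
qed

theorem mainTheorem9:
  fixes m :: nat and r :: "'f::finite \<Rightarrow> nat \<Rightarrow> real"
    and astar :: "nat \<Rightarrow> 'f set"
    and z0 zm zp :: "'f \<Rightarrow> nat \<Rightarrow> 'f set"
    and S :: "(nat \<Rightarrow> 'f set) set"
    and n :: nat and \<delta> :: real
  assumes m_pos: "m \<ge> 1"
    and NE: "pure_NE m r astar"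
    and z0: "\<And>f. joint_action m (z0 f) \<and> cnt m (z0 f) f = 0 \<and>
                  (\<forall>g. g \<noteq> f \<longrightarrow> cnt m (z0 f) g = cnt m astar g)"
    and zm: "\<And>f. cnt m astar f \<ge> 1 \<Longrightarrow> joint_action m (zm f) \<and>
                  cnt m (zm f) f = cnt m astar f - 1 \<and>
                  (\<forall>g. g \<noteq> f \<longrightarrow> cnt m (zm f) g = cnt m astar g)"
    and zp: "\<And>f. cnt m astar f \<le> m - 1 \<Longrightarrow> joint_action m (zp f) \<and>
                  cnt m (zp f) f = cnt m astar f + 1 \<and>
                  (\<forall>g. g \<noteq> f \<longrightarrow> cnt m (zp f) g = cnt m astar g)"
    and S_def: "S = {astar} \<union> range z0 \<union> {zm f | f. cnt m astar f \<ge> 1}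
                  \<union> {zp f | f. cnt m astar f \<le> m - 1}"
    and \<delta>: "0 < \<delta>" "\<delta> < 1"
    and n_large: "real n \<ge> 8 * (3 * real CARD('f) + 1) * ln ((3 * real CARD('f) + 1) / \<delta>)"
  shows "measure_pmf.prob (Pi_pmf {..<n} (\<lambda>_. {}) (\<lambda>_. pmf_of_set S))
           {samp. \<forall>i<m. \<forall>\<pi> :: 'f set pmf.
              loewner_ge (coords m) (covV m n samp)
                (dom_matrix m (real n / (24 * real CARD('f) ^ 3)) astar i \<pi>)}
         \<ge> 1 - \<delta>"
proof -
  interpret probe_actions m astar z0 zp
    using z0 zp by unfold_locales auto
  have S: "finite S" "astar \<in> S" "probes \<subseteq> S" "card S \<le> 3 * CARD('f) + 1"
    unfolding S_def probes_def using card_probe_set_le[of astar z0 zm _ zp] by (auto simp: setcompr_eq_image)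
  define frequent where "frequent = {samp :: nat \<Rightarrow> nat \<Rightarrow> 'f set.
    \<forall>s\<in>S. real n / (2 * real (card S)) \<le> real (card {k\<in>{..<n}. samp k = s})}"
  have "real (card S) * exp (- (real n / real (card S)) / 8) \<le> \<delta>"
    using S \<delta> n_large
    by (intro card_mult_exp_le[where F = "real CARD('f)"]) (auto simp: Suc_le_eq card_gt_0_iff)
  then have "1 - \<delta>
      \<le> measure_pmf.prob (Pi_pmf {..<n} (\<lambda>_. {}) (\<lambda>_. pmf_of_set S)) frequent"
    using prob_all_frequent[OF S(1), of n "\<lambda>_. {}"] S(2) unfolding frequent_def by fastforce
  also have "\<dots> \<le> measure_pmf.prob (Pi_pmf {..<n} (\<lambda>_. {}) (\<lambda>_. pmf_of_set S))
           {samp. \<forall>i<m. \<forall>\<pi> :: 'f set pmf.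
              loewner_ge (coords m) (covV m n samp)
                (dom_matrix m (real n / (24 * real CARD('f) ^ 3)) astar i \<pi>)}"
    using loewner_ge_covV_dom_matrix[OF _ S(1,3,4)] unfolding frequent_def
    by (intro measure_pmf.finite_measure_mono) auto
  finally show ?thesis .
qed

end
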